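(* Let $n\ge2$, let $v\in\mathbb A^{n-1}$, and let $x\ne x'$ be elements of $\Lambda$. Then for all $z\in v+x+V$ and $z'\in v+x'+V$ one has $\|z-z'\|\ge\frac1{n-1}$. In particular, for each $i$ the sets of $\mathfrak U_i=\{g_i+x+V:x\in\Lambda\}$ are pairwise at distance at least $1/(n-1)$.
   Context: $\mathbb A^{n-1}=\{x\in\mathbb R^n:\sum_{i=1}^n x_i=0\}$ with the norm $\|x\|=\sum_i|x_i|$. For a nonempty proper subset $I\subset\{1,\dots,n\}$ with complement $I^c$, set $\phi_I(x)=\frac{\sum_{i\in I}x_i}{\#I}-\frac{\sum_{i\notin I}x_i}{\#I^c}$. Let $V=\{x\in\mathbb A^{n-1}:\phi_I(x)\le\tfrac12$ for all nonempty proper $I\}$ and $\Lambda=\mathbb A^{n-1}\cap\mathbb Z^n$. For $i=0,\dots,n-1$ let $g_i\in\mathbb A^{n-1}$ be the vector with coordinates $(g_i)_j=(i-n)/n$ for $j\le i$ and $(g_i)_j=i/n$ for $j>i$. *)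

theory Defs
  imports Complex_Main "HOL-Library.Function_Algebras"
begin

text \<open>Points of R^n are represented as functions nat => real, with coordinates
  indexed by {1..n} and required to vanish outside {1..n}.\<close>

definition hyp :: "nat \<Rightarrow> (nat \<Rightarrow> real) set" where
  "hyp n = {x. (\<forall>j. j \<notin> {1..n} \<longrightarrow> x j = 0) \<and> (\<Sum>i=1..n. x i) = 0}"

definition l1norm :: "nat \<Rightarrow> (nat \<Rightarrow> real) \<Rightarrow> real" where
  "l1norm n x = (\<Sum>i=1..n. \<bar>x i\<bar>)"

definition phi :: "nat \<Rightarrow> nat set \<Rightarrow> (nat \<Rightarrow> real) \<Rightarrow> real" where
  "phi n I x = (\<Sum>i\<in>I. x i) / real (card I)
             - (\<Sum>i\<in>{1..n} - I. x i) / real (card ({1..n} - I))"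

definition Vset :: "nat \<Rightarrow> (nat \<Rightarrow> real) set" where
  "Vset n = {x \<in> hyp n. \<forall>I. I \<noteq> {} \<and> I \<subset> {1..n} \<longrightarrow> phi n I x \<le> 1/2}"

definition Lambda :: "nat \<Rightarrow> (nat \<Rightarrow> real) set" where
  "Lambda n = {x \<in> hyp n. \<forall>i. x i \<in> \<int>}"

definition gvec :: "nat \<Rightarrow> nat \<Rightarrow> (nat \<Rightarrow> real)" where
  "gvec n i = (\<lambda>j. if j \<in> {1..n} then (if j \<le> i then (real i - real n) / real n
                                      else real i / real n) else 0)"

definition shift :: "(nat \<Rightarrow> real) \<Rightarrow> (nat \<Rightarrow> real) set \<Rightarrow> (nat \<Rightarrow> real) set" where
  "shift a S = (\<lambda>y. a + y) ` S"

end

theory Submission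
  imports Defs
begin

text \<open>Translating by v or by gvec n i is irrelevant, so it suffices to bound
  the norm of u = w + y - y', where w = x - x' is a nonzero integer vector of zero sum
  and y, y' lie in V. Let I be the set of coordinates where w is positive, a = #I and
  b = n - a. On A^(n-1) the functional phi_I equals n (sum_I y) / (a b), so the
  constraints of V give n |sum_I y| <= a b / 2 for both y and y' (for y through
  the complement of I). As sum_I w >= a, this yields n (sum_I u) >= a n - a b = a^2 >= 1.
  Since u has zero sum, its l1-norm is at least 2 sum_I u >= 2/n >= 1/(n-1).\<close>

lemma card_add_card_compl_atLeastAtMost:
  assumes "I \<subseteq> {1..n}"
  shows "card I + card ({1..n} - I) = n"
  using assms card_mono[OF finite_atLeastAtMost assms] by (simp add: card_Diff_subset finite_subset)

lemma sum_compl_hyp: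
  assumes "y \<in> hyp n" and "I \<subseteq> {1..n}"
  shows "(\<Sum>i\<in>{1..n} - I. y i) = - (\<Sum>i\<in>I. y i)"
  using assms sum.subset_diff[of I "{1..n}" y] by (simp add: hyp_def)

lemma phi_hyp:
  assumes y: "y \<in> hyp n" and I: "I \<noteq> {}" "I \<subset> {1..n}"
  shows "phi n I y = real n * (\<Sum>i\<in>I. y i) / (real (card I) * real (card ({1..n} - I)))"
proof -
  define a where "a = real (card I)"
  define b where "b = real (card ({1..n} - I))"
  define s where "s = (\<Sum>i\<in>I. y i)"
  have "finite I" using I finite_subset by blast
  then have "a > 0" "b > 0" using I by (auto simp: a_def b_def card_gt_0_iff)
  moreover have ab: "a + b = real n"
    using card_add_card_compl_atLeastAtMost[of I n] I unfolding a_def b_def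
    by (metis less_imp_le of_nat_add)
  moreover have "phi n I y = s / a + s / b"
    using sum_compl_hyp[OF y, of I] I by (simp add: phi_def a_def b_def s_def)
  ultimately show ?thesis
    unfolding a_def[symmetric] b_def[symmetric] s_def[symmetric] by (simp add: field_simps flip: ab)
qed

lemma Vset_sum_le:
  assumes y: "y \<in> Vset n" and I: "I \<noteq> {}" "I \<subset> {1..n}"
  shows "real n * (\<Sum>i\<in>I. y i) \<le> real (card I) * real (card ({1..n} - I)) / 2"
proof -
  have "finite I" using I finite_subset by blast
  then have "real (card I) * real (card ({1..n} - I)) > 0" using I by (auto simp: card_gt_0_iff)
  moreover have "phi n I y \<le> 1/2" using y I by (simp add: Vset_def)
  ultimately show ?thesis
    using phi_hyp[of y n I] y I by (simp add: Vset_def pos_divide_le_eq)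
qed

lemma hyp_nonzero_ex_neg:
  assumes w: "w \<in> hyp n" and "w \<noteq> 0"
  shows "\<exists>i\<in>{1..n}. w i < 0"
proof (rule ccontr)
  assume "\<not> ?thesis"
  moreover have "(\<Sum>i=1..n. w i) = 0" using w by (simp add: hyp_def)
  ultimately have "\<forall>i\<in>{1..n}. w i = 0" using sum_nonneg_eq_0_iff[of "{1..n}" w] by force
  with w have "w = 0" by (auto simp: hyp_def fun_eq_iff)
  with \<open>w \<noteq> 0\<close> show False ..
qed

lemma hyp_nonzero_ex_pos:
  assumes w: "w \<in> hyp n" and "w \<noteq> 0"
  shows "\<exists>i\<in>{1..n}. w i > 0"
proof -
  have "- w \<in> hyp n" using w by (simp add: hyp_def sum_negf)
  with hyp_nonzero_ex_neg[of "- w" n] \<open>w \<noteq> 0\<close> show ?thesis by auto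
qed

lemma l1norm_ge_twice_sum:
  assumes "(\<Sum>i=1..n. u i) = 0" and "I \<subseteq> {1..n}"
  shows "2 * (\<Sum>i\<in>I. u i) \<le> l1norm n u"
proof -
  have "(\<Sum>i\<in>{1..n} - I. u i) = - (\<Sum>i\<in>I. u i)"
    using assms sum.subset_diff[of I "{1..n}" u] by simp
  moreover have "l1norm n u = (\<Sum>i\<in>I. \<bar>u i\<bar>) + (\<Sum>i\<in>{1..n} - I. \<bar>u i\<bar>)"
    using assms sum.subset_diff[of I "{1..n}" "\<lambda>i. \<bar>u i\<bar>"] by (simp add: l1norm_def)
  moreover have "(\<Sum>i\<in>I. u i) \<le> (\<Sum>i\<in>I. \<bar>u i\<bar>)"
    and "- (\<Sum>i\<in>{1..n} - I. u i) \<le> (\<Sum>i\<in>{1..n} - I. \<bar>u i\<bar>)"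
    by (auto simp: sum_negf[symmetric] intro!: sum_mono)
  ultimately show ?thesis by linarith
qed

lemma Lambda_diff:
  assumes "x \<in> Lambda n" "x' \<in> Lambda n"
  shows "x - x' \<in> Lambda n"
  using assms by (simp add: Lambda_def hyp_def sum_subtractf)

lemma Lambda_nonzero_pos_coords:
  assumes w: "w \<in> Lambda n" "w \<noteq> 0"
  defines "I \<equiv> {i \<in> {1..n}. w i > 0}"
  shows "I \<noteq> {}" and "I \<subset> {1..n}" and "real (card I) \<le> (\<Sum>i\<in>I. w i)"
proof -
  have "w \<in> hyp n" using w by (simp add: Lambda_def)
  then obtain i_pos i_neg where "i_pos \<in> {1..n}" "w i_pos > 0" "i_neg \<in> {1..n}" "w i_neg < 0"
    using hyp_nonzero_ex_pos[of w n] hyp_nonzero_ex_neg[of w n] w(2) by blast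
  then have "i_pos \<in> I" "i_neg \<in> {1..n} - I" by (auto simp: I_def)
  then show "I \<noteq> {}" "I \<subset> {1..n}" unfolding I_def by blast+
  have "w i \<ge> 1" if "i \<in> I" for i
    using that w(1) Ints_nonzero_abs_ge1[of "w i"] by (auto simp: I_def Lambda_def)
  then show "real (card I) \<le> (\<Sum>i\<in>I. w i)" using sum_mono[of I "\<lambda>_. 1" w] by simp
qed

lemma Lambda_Vset_separation:
  assumes w: "w \<in> Lambda n" "w \<noteq> 0" and y: "y \<in> Vset n" and y': "y' \<in> Vset n"
  shows "2 / real n \<le> l1norm n (w + y - y')"
proof -
  define I where "I = {i \<in> {1..n}. w i > 0}"
  define a where "a = real (card I)"
  define b where "b = real (card ({1..n} - I))"
  have hyp: "w \<in> hyp n" "y \<in> hyp n" "y' \<in> hyp n" using w y y' by (auto simp: Lambda_def Vset_def)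
  have I: "I \<noteq> {}" "I \<subset> {1..n}" and w_I: "a \<le> (\<Sum>i\<in>I. w i)"
    using Lambda_nonzero_pos_coords[OF w] unfolding I_def a_def by simp_all
  have compl_I: "{1..n} - ({1..n} - I) = I" "{1..n} - I \<noteq> {}" "{1..n} - I \<subset> {1..n}"
    using I by auto
  have "a \<ge> 1" using I finite_subset[of I "{1..n}"] unfolding a_def
    by (simp add: Suc_leI card_gt_0_iff)
  have ab: "a + b = real n"
    using card_add_card_compl_atLeastAtMost[of I n] I unfolding a_def b_def by (metis less_imp_le of_nat_add)
  have y'_I: "real n * (\<Sum>i\<in>I. y' i) \<le> a * b / 2"
    using Vset_sum_le[OF y' I] unfolding a_def b_def .
  have y_I: "- (real n * (\<Sum>i\<in>I. y i)) \<le> a * b / 2"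
    using Vset_sum_le[OF y compl_I(2,3)] sum_compl_hyp[OF hyp(2)] I
    unfolding compl_I(1) a_def b_def by (simp add: mult.commute)
  have "1 \<le> a * a" using \<open>a \<ge> 1\<close> by (metis mult_mono' mult_1_left zero_le_one)
  also have "\<dots> = a * real n - a * b" by (simp add: algebra_simps flip: ab)
  also have "\<dots> \<le> real n * (\<Sum>i\<in>I. (w + y - y') i)"
    using w_I y_I y'_I mult_left_mono[OF w_I, of "real n"]
    by (simp add: sum.distrib sum_subtractf algebra_simps)
  finally have "2 / real n \<le> 2 * (\<Sum>i\<in>I. (w + y - y') i)"
    by (cases "n = 0") (auto simp: field_simps)
  also have "\<dots> \<le> l1norm n (w + y - y')"
    using hyp I by (intro l1norm_ge_twice_sum) (auto simp: hyp_def sum.distrib sum_subtractf)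
  finally show ?thesis .
qed

theorem lemma4p1p3:
  fixes n :: nat and v :: "nat \<Rightarrow> real"
  assumes "n \<ge> 2" and "v \<in> hyp n"
  shows "(\<forall>x\<in>Lambda n. \<forall>x'\<in>Lambda n. x \<noteq> x' \<longrightarrow>
            (\<forall>z\<in>shift (v + x) (Vset n). \<forall>z'\<in>shift (v + x') (Vset n).
               l1norm n (z - z') \<ge> 1 / (real n - 1)))
       \<and> (\<forall>i<n. \<forall>x\<in>Lambda n. \<forall>x'\<in>Lambda n. x \<noteq> x' \<longrightarrow>
            (\<forall>z\<in>shift (gvec n i + x) (Vset n). \<forall>z'\<in>shift (gvec n i + x') (Vset n).
               l1norm n (z - z') \<ge> 1 / (real n - 1)))"
proof -
  have "l1norm n (z - z') \<ge> 1 / (real n - 1)"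
    if x: "x \<in> Lambda n" "x' \<in> Lambda n" "x \<noteq> x'"
      and z: "z \<in> shift (c + x) (Vset n)" "z' \<in> shift (c + x') (Vset n)" for c x x' z z'
  proof -
    obtain y y' where y: "y \<in> Vset n" "y' \<in> Vset n" and "z = c + x + y" "z' = c + x' + y'"
      using z unfolding shift_def by auto
    then have "z - z' = (x - x') + y - y'" by (simp add: algebra_simps)
    moreover have "2 / real n \<le> l1norm n ((x - x') + y - y')"
      using Lambda_Vset_separation[OF Lambda_diff[OF x(1,2)] _ y] x(3) by simp
    moreover have "1 / (real n - 1) \<le> 2 / real n" using \<open>n \<ge> 2\<close> by (simp add: field_simps)
    ultimately show ?thesis by (metis order_trans)
  qed
  then show ?thesis by blast
qed

end
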